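(* Let $\mathfrak g$ be of type $A_n$ and $i\in I$. For $b,b'\in\mathcal B(\infty)$, we have $\widetilde f_i^\ast(b)=b'$ if and only if $\widetilde e_i^\ast(b')=b$.
   Context: $I=\{1,\dots,n\}$. $\mathcal I=\{(s,t)\in\mathbb Z_{>0}\times I:s+t\le n+1\}$; $\mathcal B(\infty)$ is the set of $b=(b_{s,t})_{(s,t)\in\mathcal I}\in\mathbb Z_{\ge0}^{\mathcal I}$ with $b_{1,k}\ge b_{2,k-1}\ge\dots\ge b_{k,1}$ for $1\le k\le n$. Convention: $b_{s,t}=0$, $\mathbf e_{s,t}=0$ for $(s,t)\notin\mathcal I$. $\partial^\ast_{s,t}(b)=b_{s-1,t}-b_{s-1,t+1}-b_{s,t-1}+b_{s,t}$. For $1\le k\le i$: $\Sigma^\ast_k(b)=\sum_{t=1}^k\partial^\ast_{t,i+1-t}(b)$; $\varepsilon_i^\ast(b)=\max_k\Sigma_k^\ast(b)$; $m_i^\ast(b)$, $M_i^\ast(b)$ the smallest and largest maximizing $k$. $\widetilde f_i^\ast(b)=b+\sum_{t=1}^{m_i^\ast(b)}(\mathbf e_{t,i+1-t}-\mathbf e_{t-1,i+1-t})$; $\widetilde e_i^\ast(b)=b-\sum_{t=1}^{M_i^\ast(b)}(\mathbf e_{t,i+1-t}-\mathbf e_{t-1,i+1-t})$ if $\varepsilon_i^\ast(b)>0$, else $\widetilde e_i^\ast(b)=\mathbf 0$ (formal symbol). *)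

theory Defs
  imports Main
begin

text \<open>Type A_n, I = {1..n}. Elements b = (b_{s,t}) are represented as functions
  nat \<Rightarrow> nat \<Rightarrow> int, with the convention b_{s,t} = 0 outside the index set.\<close>

definition idx :: "nat \<Rightarrow> (nat \<times> nat) set" where
  "idx n = {(s, t). 0 < s \<and> 1 \<le> t \<and> t \<le> n \<and> s + t \<le> n + 1}"

definition Binf :: "nat \<Rightarrow> (nat \<Rightarrow> nat \<Rightarrow> int) set" where
  "Binf n = {b. (\<forall>s t. (s, t) \<notin> idx n \<longrightarrow> b s t = 0)
              \<and> (\<forall>s t. (s, t) \<in> idx n \<longrightarrow> 0 \<le> b s t)
              \<and> (\<forall>k. 1 \<le> k \<and> k \<le> n \<longrightarrow> (\<forall>j. 1 \<le> j \<and> j < k \<longrightarrow> b (j + 1) (k - j) \<le> b j (k + 1 - j)))}"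

definition unitv :: "nat \<Rightarrow> nat \<Rightarrow> nat \<Rightarrow> nat \<Rightarrow> nat \<Rightarrow> int" where
  "unitv n s t = (\<lambda>x y. if (s, t) \<in> idx n \<and> x = s \<and> y = t then 1 else 0)"

text \<open>Entry with the convention b_{s,t} = 0 outside the index set (indices are integers here
  so that s-1 = 0 is handled correctly).\<close>
definition ent :: "nat \<Rightarrow> (nat \<Rightarrow> nat \<Rightarrow> int) \<Rightarrow> int \<Rightarrow> int \<Rightarrow> int" where
  "ent n b s t = (if s \<ge> 1 \<and> t \<ge> 1 \<and> (nat s, nat t) \<in> idx n then b (nat s) (nat t) else 0)"

definition dstar :: "nat \<Rightarrow> (nat \<Rightarrow> nat \<Rightarrow> int) \<Rightarrow> int \<Rightarrow> int \<Rightarrow> int" where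
  "dstar n b s t = ent n b (s - 1) t - ent n b (s - 1) (t + 1) - ent n b s (t - 1) + ent n b s t"

definition Sigstar :: "nat \<Rightarrow> nat \<Rightarrow> (nat \<Rightarrow> nat \<Rightarrow> int) \<Rightarrow> nat \<Rightarrow> int" where
  "Sigstar n i b k = (\<Sum>t = 1..k. dstar n b (int t) (int i + 1 - int t))"

definition epsstar :: "nat \<Rightarrow> nat \<Rightarrow> (nat \<Rightarrow> nat \<Rightarrow> int) \<Rightarrow> int" where
  "epsstar n i b = Max (Sigstar n i b ` {1..i})"

definition mstar :: "nat \<Rightarrow> nat \<Rightarrow> (nat \<Rightarrow> nat \<Rightarrow> int) \<Rightarrow> nat" where
  "mstar n i b = Min {k \<in> {1..i}. Sigstar n i b k = epsstar n i b}"

definition Mstar :: "nat \<Rightarrow> nat \<Rightarrow> (nat \<Rightarrow> nat \<Rightarrow> int) \<Rightarrow> nat" where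
  "Mstar n i b = Max {k \<in> {1..i}. Sigstar n i b k = epsstar n i b}"

definition shiftv :: "nat \<Rightarrow> nat \<Rightarrow> nat \<Rightarrow> nat \<Rightarrow> nat \<Rightarrow> int" where
  "shiftv n i k = (\<lambda>x y. \<Sum>t = 1..k. unitv n t (i + 1 - t) x y - unitv n (t - 1) (i + 1 - t) x y)"

definition fstar :: "nat \<Rightarrow> nat \<Rightarrow> (nat \<Rightarrow> nat \<Rightarrow> int) \<Rightarrow> (nat \<Rightarrow> nat \<Rightarrow> int)" where
  "fstar n i b = (\<lambda>x y. b x y + shiftv n i (mstar n i b) x y)"

text \<open>None represents the formal symbol 0.\<close>
definition estar :: "nat \<Rightarrow> nat \<Rightarrow> (nat \<Rightarrow> nat \<Rightarrow> int) \<Rightarrow> (nat \<Rightarrow> nat \<Rightarrow> int) option" where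
  "estar n i b = (if epsstar n i b > 0
                  then Some (\<lambda>x y. b x y - shiftv n i (Mstar n i b) x y) else None)"

end

theory Submission
  imports Defs
begin

text \<open>The partial sums telescope: \<Sigma>*_k(b) = b_{k,i+1-k} - b_{k,i-k}. Hence adding the vector
  \<Sum>_{t=1}^m (e_{t,i+1-t} - e_{t-1,i+1-t}) raises \<Sigma>*_k by 2 for k < m, by 1 for k = m and not
  at all for k > m. If m is the smallest maximiser of \<Sigma>*(b), it thus becomes the largest
  maximiser after the shift, and the maximum grows by one; subtracting the vector at the largest
  maximiser m reverses this and makes m the smallest maximiser. Finally
  \<epsilon>*_i(b) \<ge> \<Sigma>*_i(b) = b_{i,1} \<ge> 0, so \<epsilon>*_i(f*_i b) > 0.\<close>

definition first_argmax :: "('a::linorder \<Rightarrow> 'b::linorder) \<Rightarrow> 'a set \<Rightarrow> 'a" where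
  "first_argmax f A = Min {k \<in> A. f k = Max (f ` A)}"

definition last_argmax :: "('a::linorder \<Rightarrow> 'b::linorder) \<Rightarrow> 'a set \<Rightarrow> 'a" where
  "last_argmax f A = Max {k \<in> A. f k = Max (f ` A)}"

lemma argmax_set_nonempty:
  assumes "finite A" "A \<noteq> {}"
  shows "{k \<in> A. f k = Max (f ` A)} \<noteq> {}"
  using obtains_MAX[OF assms] by (metis (mono_tags, lifting) empty_iff mem_Collect_eq)

lemma le_Max_image: "finite A \<Longrightarrow> k \<in> A \<Longrightarrow> f k \<le> Max (f ` A)"
  by simp

lemma Max_image_eqI:
  assumes "finite A" "m \<in> A" "\<And>k. k \<in> A \<Longrightarrow> f k \<le> f m"
  shows "Max (f ` A) = f m"
  by (rule Max_eqI) (use assms in auto)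

lemma
  assumes "finite A" "A \<noteq> {}"
  shows first_argmax_in: "first_argmax f A \<in> A"
    and first_argmax_max: "f (first_argmax f A) = Max (f ` A)"
    and less_first_argmax: "k \<in> A \<Longrightarrow> k < first_argmax f A \<Longrightarrow> f k < Max (f ` A)"
proof -
  let ?S = "{k \<in> A. f k = Max (f ` A)}"
  have S: "finite ?S" "?S \<noteq> {}"
    using assms argmax_set_nonempty by auto
  show "first_argmax f A \<in> A" "f (first_argmax f A) = Max (f ` A)"
    using Min_in[OF S] unfolding first_argmax_def by auto
  assume "k \<in> A" "k < first_argmax f A"
  then show "f k < Max (f ` A)"
    using Min_le[OF S(1), of k] le_Max_image[OF assms(1)] unfolding first_argmax_def
    by (metis (mono_tags, lifting) leD mem_Collect_eq order.not_eq_order_implies_strict)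
qed

lemma
  assumes "finite A" "A \<noteq> {}"
  shows last_argmax_in: "last_argmax f A \<in> A"
    and last_argmax_max: "f (last_argmax f A) = Max (f ` A)"
    and greater_last_argmax: "k \<in> A \<Longrightarrow> last_argmax f A < k \<Longrightarrow> f k < Max (f ` A)"
proof -
  let ?S = "{k \<in> A. f k = Max (f ` A)}"
  have S: "finite ?S" "?S \<noteq> {}"
    using assms argmax_set_nonempty by auto
  show "last_argmax f A \<in> A" "f (last_argmax f A) = Max (f ` A)"
    using Max_in[OF S] unfolding last_argmax_def by auto
  assume "k \<in> A" "last_argmax f A < k"
  then show "f k < Max (f ` A)"
    using Max_ge[OF S(1), of k] le_Max_image[OF assms(1)] unfolding last_argmax_def
    by (metis (mono_tags, lifting) leD mem_Collect_eq order.not_eq_order_implies_strict)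
qed

lemma first_argmax_eqI:
  assumes "finite A" "m \<in> A" "f m = Max (f ` A)" "\<And>k. k \<in> A \<Longrightarrow> k < m \<Longrightarrow> f k < f m"
  shows "first_argmax f A = m"
  unfolding first_argmax_def
proof (rule Min_eqI)
  fix k assume "k \<in> {k \<in> A. f k = Max (f ` A)}"
  then show "m \<le> k" using assms(3) assms(4)[of k] by (metis (mono_tags) mem_Collect_eq not_le less_irrefl)
qed (use assms in auto)

lemma last_argmax_eqI:
  assumes "finite A" "m \<in> A" "f m = Max (f ` A)" "\<And>k. k \<in> A \<Longrightarrow> m < k \<Longrightarrow> f k < f m"
  shows "last_argmax f A = m"
  unfolding last_argmax_def
proof (rule Max_eqI)
  fix k assume "k \<in> {k \<in> A. f k = Max (f ` A)}"
  then show "k \<le> m" using assms(3) assms(4)[of k] by (metis (mono_tags) mem_Collect_eq not_le less_irrefl)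
qed (use assms in auto)

definition shift_gain :: "'a::linorder \<Rightarrow> 'a \<Rightarrow> int" where
  "shift_gain m k = (if k \<le> m then 1 else 0) + (if k < m then 1 else 0)"

lemma add_shift_gain_first_argmax:
  fixes f g :: "'a::linorder \<Rightarrow> int"
  assumes A: "finite A" "A \<noteq> {}" and m: "m = first_argmax f A"
    and g: "\<And>k. k \<in> A \<Longrightarrow> g k = f k + shift_gain m k"
  shows "Max (g ` A) = Max (f ` A) + 1" and "last_argmax g A = m"
proof -
  have "m \<in> A" "f m = Max (f ` A)"
    using first_argmax_in[OF A] first_argmax_max[OF A] by (auto simp: m)
  then have gm: "g m = Max (f ` A) + 1"
    using g by (simp add: shift_gain_def)
  have after: "g k < g m" if "k \<in> A" "m < k" for k
    using that g le_Max_image[OF A(1), of k f] gm by (simp add: shift_gain_def)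
  have before: "g k \<le> g m" if "k \<in> A" "k < m" for k
    using that g less_first_argmax[OF A, of k f] gm by (force simp: m shift_gain_def)
  have "g k \<le> g m" if "k \<in> A" for k
    using that after before by (cases k m rule: linorder_cases) (auto intro: less_imp_le)
  then have "Max (g ` A) = g m"
    using \<open>m \<in> A\<close> by (intro Max_image_eqI[OF A(1)])
  with gm show "Max (g ` A) = Max (f ` A) + 1" by simp
  show "last_argmax g A = m"
    using \<open>m \<in> A\<close> \<open>Max (g ` A) = g m\<close> after by (intro last_argmax_eqI[OF A(1)]) auto
qed

lemma diff_shift_gain_last_argmax:
  fixes f g :: "'a::linorder \<Rightarrow> int"
  assumes A: "finite A" "A \<noteq> {}" and m: "m = last_argmax g A"
    and f: "\<And>k. k \<in> A \<Longrightarrow> f k = g k - shift_gain m k"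
  shows "Max (f ` A) = Max (g ` A) - 1" and "first_argmax f A = m"
proof -
  have "m \<in> A" "g m = Max (g ` A)"
    using last_argmax_in[OF A] last_argmax_max[OF A] by (auto simp: m)
  then have fm: "f m = Max (g ` A) - 1"
    using f by (simp add: shift_gain_def)
  have before: "f k < f m" if "k \<in> A" "k < m" for k
    using that f le_Max_image[OF A(1), of k g] fm by (force simp: shift_gain_def)
  have after: "f k \<le> f m" if "k \<in> A" "m < k" for k
    using that f greater_last_argmax[OF A, of k g] fm by (force simp: m shift_gain_def)
  have "f k \<le> f m" if "k \<in> A" for k
    using that after before by (cases k m rule: linorder_cases) (auto intro: less_imp_le)
  then have "Max (f ` A) = f m"
    using \<open>m \<in> A\<close> by (intro Max_image_eqI[OF A(1)])
  with fm show "Max (f ` A) = Max (g ` A) - 1" by simp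
  show "first_argmax f A = m"
    using \<open>m \<in> A\<close> \<open>Max (f ` A) = f m\<close> before by (intro first_argmax_eqI[OF A(1)]) auto
qed

lemma mstar_eq_first_argmax: "mstar n i b = first_argmax (Sigstar n i b) {1..i}"
  by (simp add: mstar_def epsstar_def first_argmax_def)

lemma Mstar_eq_last_argmax: "Mstar n i b = last_argmax (Sigstar n i b) {1..i}"
  by (simp add: Mstar_def epsstar_def last_argmax_def)

lemma Sigstar_telescope:
  "Sigstar n i b k = ent n b (int k) (int i + 1 - int k) - ent n b (int k) (int i - int k)"
proof (induction k)
  case 0
  then show ?case by (simp add: Sigstar_def ent_def)
next
  case (Suc k)
  have "Sigstar n i b (Suc k) = Sigstar n i b k + dstar n b (int (Suc k)) (int i + 1 - int (Suc k))"
    by (simp add: Sigstar_def)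
  with Suc show ?case by (simp add: dstar_def algebra_simps)
qed

lemma Sigstar_add: "Sigstar n i (\<lambda>x y. b x y + v x y) k = Sigstar n i b k + Sigstar n i v k"
  by (simp add: Sigstar_telescope ent_def)

lemma Sigstar_diff: "Sigstar n i (\<lambda>x y. b x y - v x y) k = Sigstar n i b k - Sigstar n i v k"
  by (simp add: Sigstar_telescope ent_def)

lemma ent_eq: "1 \<le> s \<Longrightarrow> 1 \<le> t \<Longrightarrow> (s, t) \<in> idx n \<Longrightarrow> ent n b (int s) (int t) = b s t"
  by (simp add: ent_def)

lemma ent_shiftv_antidiagonal:
  assumes "1 \<le> k" "k \<le> i" "i \<le> n" "m \<le> i"
  shows "ent n (shiftv n i m) (int k) (int i + 1 - int k) = (if k \<le> m then 1 else 0)"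
proof -
  have "int i + 1 - int k = int (i + 1 - k)"
    using assms by simp
  then have "ent n (shiftv n i m) (int k) (int i + 1 - int k) = shiftv n i m k (i + 1 - k)"
    using assms by (simp only:) (rule ent_eq, auto simp: idx_def)
  also have "\<dots> = (\<Sum>t = 1..m. if t = k then 1 else 0)"
    unfolding shiftv_def
    by (rule sum.cong) (use assms in \<open>auto simp: unitv_def idx_def\<close>)
  also have "\<dots> = (if k \<le> m then 1 else 0)"
    using assms by (simp add: sum.delta)
  finally show ?thesis .
qed

lemma ent_shiftv_antidiagonal_pred:
  assumes "1 \<le> k" "k \<le> i" "i \<le> n" "m \<le> i"
  shows "ent n (shiftv n i m) (int k) (int i - int k) = (if k < m then -1 else 0)"
proof (cases "k = i")
  case True
  then show ?thesis using assms by (simp add: ent_def)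
next
  case False
  have "int i - int k = int (i - k)"
    using assms by simp
  then have "ent n (shiftv n i m) (int k) (int i - int k) = shiftv n i m k (i - k)"
    using assms False by (simp only:) (rule ent_eq, auto simp: idx_def)
  also have "\<dots> = (\<Sum>t = 1..m. if t = Suc k then -1 else 0)"
    unfolding shiftv_def
    by (rule sum.cong) (use assms False in \<open>auto simp: unitv_def idx_def\<close>)
  also have "\<dots> = (if k < m then -1 else 0)"
    using assms by (simp add: sum.delta)
  finally show ?thesis .
qed

lemma Sigstar_shiftv:
  assumes "k \<in> {1..i}" "i \<le> n" "m \<le> i"
  shows "Sigstar n i (shiftv n i m) k = shift_gain m k"
  using assms ent_shiftv_antidiagonal[of k i n m] ent_shiftv_antidiagonal_pred[of k i n m]
  by (simp add: Sigstar_telescope shift_gain_def)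

lemma epsstar_nonneg:
  assumes "i \<in> {1..n}" "b \<in> Binf n"
  shows "0 \<le> epsstar n i b"
proof -
  have "Sigstar n i b i = b i 1"
    using assms(1) by (simp add: Sigstar_telescope ent_def idx_def)
  also have "0 \<le> b i 1"
    using assms by (simp add: Binf_def idx_def)
  finally show ?thesis
    using assms(1) by (simp add: epsstar_def le_Max_image order.trans)
qed

theorem proposition6p6:
  fixes n i :: nat and b b' :: "nat \<Rightarrow> nat \<Rightarrow> int"
  assumes "i \<in> {1..n}" and "b \<in> Binf n" and "b' \<in> Binf n"
  shows "fstar n i b = b' \<longleftrightarrow> estar n i b' = Some b"
proof -
  have A: "finite {1..i}" "{1..i} \<noteq> {}" using assms(1) by auto
  show ?thesis
  proof
    assume "fstar n i b = b'"
    define m where "m = mstar n i b"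
    have m: "m = first_argmax (Sigstar n i b) {1..i}"
      by (simp add: m_def mstar_eq_first_argmax)
    have b': "b' = (\<lambda>x y. b x y + shiftv n i m x y)"
      using \<open>fstar n i b = b'\<close> by (auto simp: fstar_def m_def)
    have "m \<le> i" using first_argmax_in[OF A] m by auto
    then have "\<And>k. k \<in> {1..i} \<Longrightarrow> Sigstar n i b' k = Sigstar n i b k + shift_gain m k"
      using assms(1) by (simp add: b' Sigstar_add Sigstar_shiftv)
    then have "epsstar n i b' = epsstar n i b + 1" and "Mstar n i b' = m"
      using add_shift_gain_first_argmax[OF A m] by (simp_all add: epsstar_def Mstar_eq_last_argmax)
    with epsstar_nonneg[OF assms(1,2)] show "estar n i b' = Some b"
      by (simp add: estar_def b')
  next
    assume "estar n i b' = Some b"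
    define m where "m = Mstar n i b'"
    have m: "m = last_argmax (Sigstar n i b') {1..i}"
      by (simp add: m_def Mstar_eq_last_argmax)
    have b: "b = (\<lambda>x y. b' x y - shiftv n i m x y)"
      using \<open>estar n i b' = Some b\<close> by (auto simp: estar_def m_def split: if_splits)
    have "m \<le> i" using last_argmax_in[OF A] m by auto
    then have "\<And>k. k \<in> {1..i} \<Longrightarrow> Sigstar n i b k = Sigstar n i b' k - shift_gain m k"
      using assms(1) by (simp add: b Sigstar_diff Sigstar_shiftv)
    then have "mstar n i b = m"
      using diff_shift_gain_last_argmax(2)[OF A m] by (simp add: mstar_eq_first_argmax)
    then show "fstar n i b = b'"
      by (simp add: fstar_def b)
  qed
qed

end
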